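(* In the setting below, if $C$ is Euclidean LCD, then $g(x)$ is self-reciprocal.
   Context: Let $q$ be a prime power, $F=\mathbb{F}_q$, $m\ge1$ with $\gcd(q,m)=1$, and $R=F[x]/\langle x^m-1\rangle$; elements of $R$ are represented by polynomials of degree $<m$ and identified with their coefficient vectors in $F^m$. A quasi-cyclic code of length $2m$ and index $2$ is an $R$-submodule $C\subseteq R^2$. The Euclidean inner product of $(a_1,a_2),(b_1,b_2)\in R^2$ is the sum of the standard dot products of the coefficient vectors of $a_1,b_1$ and of $a_2,b_2$; $C$ is Euclidean LCD if $C\cap C^{\perp_e}=\{0\}$. For a nonzero polynomial $f$ of degree $k$, $f^*(x)=x^kf(x^{-1})$; $f$ is self-reciprocal if $f^*=\alpha f$ for some $\alpha\in F$. Suppose $C$ is generated as an $R$-module by $(g_{11}(x),g_{12}(x))$ and $(0,g_{22}(x))$, where $g_{11},g_{12},g_{22}\in F[x]$ satisfy: $g_{11}\mid x^m-1$, $g_{22}\mid x^m-1$, $\deg g_{12}<\deg g_{22}$, and $g_{11}g_{22}\mid (x^m-1)g_{12}$. Let $g=\gcd(g_{11},g_{22})$. *)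

theory Defs
  imports "HOL-Computational_Algebra.Polynomial" "HOL-Computational_Algebra.Polynomial_Factorial" "HOL-Library.Cardinality"
begin

definition xm1 :: "nat \<Rightarrow> 'a::field poly" where
  "xm1 m = monom 1 m - 1"

text \<open>R^2, elements of R = F[x]/(x^m-1) represented by polynomials of degree < m.\<close>
definition R2 :: "nat \<Rightarrow> ('a::field poly \<times> 'a poly) set" where
  "R2 m = {(a, b). degree a < m \<and> degree b < m}"

definition qc_code :: "nat \<Rightarrow> 'a::field poly \<Rightarrow> 'a poly \<Rightarrow> 'a poly \<Rightarrow> ('a poly \<times> 'a poly) set" where
  "qc_code m g11 g12 g22 =
     {((r1 * g11) mod xm1 m, (r1 * g12 + r2 * g22) mod xm1 m) | r1 r2. True}"

definition euclid_ip :: "nat \<Rightarrow> ('a::field poly \<times> 'a poly) \<Rightarrow> ('a poly \<times> 'a poly) \<Rightarrow> 'a" where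
  "euclid_ip m u v =
     (\<Sum>i<m. coeff (fst u) i * coeff (fst v) i) + (\<Sum>i<m. coeff (snd u) i * coeff (snd v) i)"

definition euclid_dual :: "nat \<Rightarrow> ('a::field poly \<times> 'a poly) set \<Rightarrow> ('a poly \<times> 'a poly) set" where
  "euclid_dual m C = {v \<in> R2 m. \<forall>c\<in>C. euclid_ip m c v = 0}"

definition euclid_LCD :: "nat \<Rightarrow> ('a::field poly \<times> 'a poly) set \<Rightarrow> bool" where
  "euclid_LCD m C \<longleftrightarrow> C \<inter> euclid_dual m C = {(0, 0)}"

text \<open>f^*(x) = x^(deg f) f(1/x) is the library's reflect_poly.\<close>
definition self_reciprocal :: "'a::field poly \<Rightarrow> bool" where
  "self_reciprocal f \<longleftrightarrow> f \<noteq> 0 \<and> (\<exists>\<alpha>. reflect_poly f = smult \<alpha> f)"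

end

(*
  Since m is a unit in F, x^m - 1 is squarefree; hence g = gcd g11 g22 is coprime to
  (x^m - 1)/g, and g11 g22 | (x^m - 1) g12 forces g | g12, so g divides both components of
  every codeword. As x^m - 1 is anti-self-reciprocal, x^m - 1 = u g^* for some u. The Euclidean
  inner product of a, b in R is the coefficient of x^(m-1) in a times the reversal of b, taken
  mod x^m - 1; for b a multiple of g this product is a multiple of u g^* when a is a multiple of
  u, so u R x u R is orthogonal to C. The codewords (u g11, u g12) and (0, u g22) thus lie in
  C \<inter> C^perp, and the LCD property makes them vanish: g^* divides g11 and g22, hence g.
  Since g(0) \<noteq> 0, g^* has the degree of g and is a scalar multiple of it.
*)
theory Submission
  imports Defs "HOL-Computational_Algebra.Squarefree"
begin

text \<open>Translation by 1 permutes a finite ring, so it fixes the sum of all elements.\<close>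
lemma of_nat_CARD_eq_0: "(of_nat CARD('a::{ring_1,finite}) :: 'a) = 0"
proof -
  have "(\<Sum>x\<in>UNIV. x + 1) = (\<Sum>x\<in>UNIV. x :: 'a)"
    by (rule sum.reindex_bij_witness[of _ "\<lambda>x. x - 1" "\<lambda>x. x + 1"]) auto
  thus ?thesis by (simp add: sum.distrib)
qed

lemma of_nat_neq_0_if_coprime_CARD:
  assumes "coprime CARD('a::{field,finite}) m"
  shows "(of_nat m :: 'a) \<noteq> 0"
proof
  assume "(of_nat m :: 'a) = 0"
  hence "CHAR('a) dvd m" by (simp add: of_nat_eq_0_iff_char_dvd)
  moreover have "CHAR('a) dvd CARD('a)"
    using of_nat_CARD_eq_0 by (simp only: of_nat_eq_0_iff_char_dvd)
  ultimately have "CHAR('a) = 1"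
    using assms by (metis coprime_common_divisor_nat)
  thus False using of_nat_CHAR[where 'a='a] by simp
qed

lemma coeff_xm1: "coeff (xm1 m) k = (if k = m then 1 else 0) - (if k = 0 then 1 else 0)"
  by (simp add: xm1_def)

lemma degree_xm1: "m \<ge> 1 \<Longrightarrow> degree (xm1 m) = m"
  by (rule antisym, rule degree_le) (auto simp: coeff_xm1 intro!: le_degree)

lemma xm1_neq_0: "m \<ge> 1 \<Longrightarrow> (xm1 m :: 'a::field poly) \<noteq> 0"
  using coeff_xm1[of m 0, where 'a='a] by auto

lemma degree_mod_xm1: "m \<ge> 1 \<Longrightarrow> degree (p mod xm1 m :: 'a::field poly) < m"
  using degree_mod_less[OF xm1_neq_0, of m p] degree_xm1[of m, where 'a='a] by auto

lemma reflect_poly_xm1: "reflect_poly (xm1 m) = - xm1 m"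
proof (cases "m = 0")
  case False
  thus ?thesis
    by (intro poly_eqI) (auto simp: coeff_reflect_poly degree_xm1 coeff_xm1)
qed (simp add: xm1_def)

lemma square_dvd_imp_dvd_pderiv:
  fixes d p :: "'a::idom poly"
  assumes "d\<^sup>2 dvd p"
  shows "d dvd pderiv p"
proof -
  obtain k where "p = d * d * k" using assms unfolding power2_eq_square by (rule dvdE)
  hence "pderiv p = d * (d * pderiv k + k * pderiv d + k * pderiv d)"
    by (simp add: pderiv_mult algebra_simps)
  thus ?thesis by simp
qed

text \<open>The usual separability argument: x (x^m - 1)' - m (x^m - 1) = m is a unit.\<close>
lemma squarefree_xm1:
  assumes "(of_nat m :: 'a::field) \<noteq> 0"
  shows "squarefree (xm1 m :: 'a poly)"
proof (rule squarefreeI)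
  fix d :: "'a poly" assume sq: "d\<^sup>2 dvd xm1 m"
  have m: "m \<ge> 1" using assms by (cases m) auto
  have "pderiv (xm1 m :: 'a poly) = monom (of_nat m) (m - 1)"
    by (simp add: xm1_def pderiv_diff pderiv_monom)
  moreover have "[:of_nat m:] = monom 1 1 * monom (of_nat m) (m - 1) - smult (of_nat m) (xm1 m :: 'a poly)"
    using m by (simp add: xm1_def mult_monom smult_diff_right smult_monom monom_0)
  ultimately have "[:of_nat m:] = monom 1 1 * pderiv (xm1 m) - smult (of_nat m) (xm1 m :: 'a poly)"
    by simp
  moreover have "d dvd monom 1 1 * pderiv (xm1 m) - smult (of_nat m) (xm1 m)"
    using square_dvd_imp_dvd_pderiv[OF sq] dvd_trans[OF dvd_power[of 2 d] sq]
    by (simp add: dvd_smult)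
  ultimately have "d dvd [:of_nat m:]" by simp
  thus "is_unit d" using assms dvd_unit_imp_unit is_unit_triv by blast
qed

lemma dvd_if_square_dvd_mult_squarefree:
  fixes g h f :: "'a::factorial_semiring_gcd"
  assumes "squarefree h" "g dvd h" "g * g dvd h * f"
  shows "g dvd f"
proof -
  obtain e where he: "h = g * e" using assms(2) by (rule dvdE)
  have "coprime g e"
    using assms(1) by (auto simp: he power2_eq_square intro!: coprimeI squarefreeD mult_dvd_mono)
  have "g \<noteq> 0" using assms(1) he by auto
  with assms(3) have "g dvd e * f" by (simp add: he mult.assoc)
  with \<open>coprime g e\<close> show ?thesis by (simp add: coprime_dvd_mult_right_iff)
qed

definition cyclic_coeff :: "nat \<Rightarrow> 'a::field poly \<Rightarrow> 'a" where
  "cyclic_coeff m p = coeff (p mod xm1 m) (m - 1)"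

lemma cyclic_coeff_xm1_mult [simp]: "cyclic_coeff m (xm1 m * q) = 0"
  by (simp add: cyclic_coeff_def)

lemma cyclic_coeff_mod_mult: "cyclic_coeff m (p mod xm1 m * q) = cyclic_coeff m (p * q)"
  by (simp add: cyclic_coeff_def mod_mult_left_eq)

text \<open>Write p as its part of degree below m plus x^m times the rest; modulo x^m - 1 the two
  parts are added, and the rest has no coefficient at x^(m-1).\<close>
lemma cyclic_coeff_eq_coeff:
  assumes "degree p < 2 * m - 1"
  shows "cyclic_coeff m p = coeff p (m - 1)"
proof -
  have m: "m \<ge> 1" using assms by simp
  define lo where "lo = poly_cutoff m p"
  define hi where "hi = poly_shift m p"
  have "p = xm1 m * hi + (lo + hi)"
  proof (rule poly_eqI)
    fix k
    show "coeff p k = coeff (xm1 m * hi + (lo + hi)) k"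
      by (simp add: lo_def hi_def xm1_def left_diff_distrib coeff_monom_mult coeff_poly_cutoff
                    coeff_poly_shift)
  qed
  hence "p mod xm1 m = (lo + hi) mod xm1 m" by (metis mod_mult_self4)
  also have "degree (lo + hi) < m"
  proof (intro degree_lessI allI impI)
    fix k assume "k \<ge> m"
    thus "coeff (lo + hi) k = 0"
      using assms by (simp add: lo_def hi_def coeff_poly_cutoff coeff_poly_shift coeff_eq_0)
  qed (use m in simp)
  hence "(lo + hi) mod xm1 m = lo + hi" using degree_xm1[OF m, where 'a='a] by (simp add: mod_poly_less)
  finally have "p mod xm1 m = lo + hi" .
  moreover have "coeff hi (m - 1) = 0"
    using assms by (simp add: hi_def coeff_poly_shift coeff_eq_0)
  ultimately show ?thesis using m by (simp add: cyclic_coeff_def lo_def coeff_poly_cutoff)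
qed

text \<open>x^K p(1/x), i.e. the coefficient vector (p_0, ..., p_K) read backwards.\<close>
definition reversal :: "nat \<Rightarrow> 'a::field poly \<Rightarrow> 'a poly" where
  "reversal K p = monom 1 (K - degree p) * reflect_poly p"

lemma coeff_reversal:
  assumes "degree p \<le> K"
  shows "coeff (reversal K p) j = (if j \<le> K then coeff p (K - j) else 0)"
  using assms by (auto simp: reversal_def coeff_monom_mult coeff_reflect_poly coeff_eq_0)

lemma degree_reversal_le: "degree p \<le> K \<Longrightarrow> degree (reversal K p) \<le> K"
  by (rule degree_le) (simp add: coeff_reversal)

lemma reversal_mult:
  assumes "degree p + degree q \<le> K"
  shows "reversal K (p * q) = reflect_poly p * reversal (K - degree p) q"
proof (cases "p = 0 \<or> q = 0")
  case False
  hence "K - degree (p * q) = K - degree p - degree q" by (simp add: degree_mult_eq)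
  thus ?thesis by (simp add: reversal_def reflect_poly_mult ac_simps)
qed (auto simp: reversal_def)

lemma inner_product_eq_cyclic_coeff:
  assumes "degree a < m" "degree b < m"
  shows "(\<Sum>i<m. coeff a i * coeff b i) = cyclic_coeff m (a * reversal (m - 1) b)"
proof -
  have b: "degree b \<le> m - 1" using assms(2) by simp
  have "degree (a * reversal (m - 1) b) \<le> degree a + (m - 1)"
    using degree_mult_le[of a] degree_reversal_le[OF b] by (meson add_left_mono order_trans)
  hence "cyclic_coeff m (a * reversal (m - 1) b) = coeff (a * reversal (m - 1) b) (m - 1)"
    using assms by (intro cyclic_coeff_eq_coeff) linarith
  also have "\<dots> = (\<Sum>i\<le>m - 1. coeff a i * coeff b i)"
    unfolding coeff_mult
  proof (rule sum.cong)
    fix i assume "i \<in> {..m - 1}"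
    hence "m - 1 - (m - 1 - i) = i" by simp
    thus "coeff a i * coeff (reversal (m - 1) b) (m - 1 - i) = coeff a i * coeff b i"
      by (simp only: coeff_reversal[OF b]) simp
  qed simp
  also have "{..m - 1} = {..<m}" using assms by auto
  finally show ?thesis by simp
qed

lemma inner_product_mod_xm1_eq_0:
  assumes "xm1 m = u * reflect_poly g" "g dvd b" "degree b < m"
  shows "(\<Sum>i<m. coeff ((u * s) mod xm1 m) i * coeff b i) = 0"
proof (cases "b = 0")
  case False
  have m: "m \<ge> 1" using assms(3) by simp
  obtain k where b: "b = g * k" using assms(2) by (rule dvdE)
  have "degree g + degree k \<le> m - 1"
    using assms(3) False by (auto simp: b degree_mult_eq)
  hence "reversal (m - 1) b = reflect_poly g * reversal (m - 1 - degree g) k"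
    by (simp add: b reversal_mult)
  hence "u * s * reversal (m - 1) b = xm1 m * (s * reversal (m - 1 - degree g) k)"
    by (simp add: assms(1) ac_simps)
  moreover have "(\<Sum>i<m. coeff ((u * s) mod xm1 m) i * coeff b i)
      = cyclic_coeff m ((u * s) mod xm1 m * reversal (m - 1) b)"
    using assms(3) by (intro inner_product_eq_cyclic_coeff degree_mod_xm1 m)
  ultimately show ?thesis by (metis cyclic_coeff_mod_mult cyclic_coeff_xm1_mult)
qed simp

lemma mod_xm1_mult_in_euclid_dual:
  assumes m: "m \<ge> 1" and u: "xm1 m = u * reflect_poly g" and g: "g dvd xm1 m"
    and "g dvd g11" "g dvd g12" "g dvd g22"
  shows "((u * s1) mod xm1 m, (u * s2) mod xm1 m) \<in> euclid_dual m (qc_code m g11 g12 g22)"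
proof -
  have orth: "(\<Sum>i<m. coeff (w mod xm1 m) i * coeff ((u * s) mod xm1 m) i) = 0"
    if "g dvd w" for w s
  proof -
    have "g dvd w mod xm1 m" using that g by (simp add: dvd_mod)
    thus ?thesis
      using inner_product_mod_xm1_eq_0[OF u _ degree_mod_xm1[OF m]] by (simp add: mult.commute)
  qed
  have "euclid_ip m c ((u * s1) mod xm1 m, (u * s2) mod xm1 m) = 0"
    if c: "c \<in> qc_code m g11 g12 g22" for c
  proof -
    obtain r1 r2 where c: "c = ((r1 * g11) mod xm1 m, (r1 * g12 + r2 * g22) mod xm1 m)"
      using c unfolding qc_code_def by blast
    have "g dvd r1 * g11" "g dvd r1 * g12 + r2 * g22" using assms(4-6) by simp_all
    thus ?thesis by (simp add: c euclid_ip_def orth)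
  qed
  thus ?thesis by (simp add: euclid_dual_def R2_def degree_mod_xm1[OF m])
qed

lemma reflect_poly_dvd_if_euclid_LCD:
  assumes m: "m \<ge> 1" and lcd: "euclid_LCD m (qc_code m g11 g12 g22)"
    and u: "xm1 m = u * reflect_poly g" and g: "g dvd xm1 m" "g dvd g11" "g dvd g12" "g dvd g22"
  shows "reflect_poly g dvd g11 \<and> reflect_poly g dvd g22"
proof -
  have u0: "u \<noteq> 0" using u xm1_neq_0[OF m] by (metis mult_zero_left)
  have dvd: "reflect_poly g dvd s1 \<and> reflect_poly g dvd s2"
    if "((u * s1) mod xm1 m, (u * s2) mod xm1 m) \<in> qc_code m g11 g12 g22" for s1 s2
  proof -
    from that mod_xm1_mult_in_euclid_dual[OF m u g]
    have "((u * s1) mod xm1 m, (u * s2) mod xm1 m) = (0, 0)"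
      using lcd unfolding euclid_LCD_def by blast
    hence "u * reflect_poly g dvd u * s1 \<and> u * reflect_poly g dvd u * s2"
      by (simp add: u[symmetric] mod_eq_0_iff_dvd)
    thus ?thesis using u0 by simp
  qed
  have "((u * g11) mod xm1 m, (u * g12) mod xm1 m) \<in> qc_code m g11 g12 g22"
    unfolding qc_code_def by (rule CollectI, rule exI[of _ u], rule exI[of _ 0]) simp
  hence "reflect_poly g dvd g11" by (rule dvd[THEN conjunct1])
  moreover have "((u * 0) mod xm1 m, (u * g22) mod xm1 m) \<in> qc_code m g11 g12 g22"
    unfolding qc_code_def by (rule CollectI, rule exI[of _ 0], rule exI[of _ u]) simp
  hence "reflect_poly g dvd g22" by (rule dvd[THEN conjunct2])
  ultimately show ?thesis ..
qed

text \<open>g^* has the degree of g when g(0) \<noteq> 0, so g^* dvd g leaves only a constant cofactor.\<close>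
lemma self_reciprocal_if_reflect_poly_dvd:
  fixes g :: "'a::field poly"
  assumes "coeff g 0 \<noteq> 0" "reflect_poly g dvd g"
  shows "self_reciprocal g"
proof -
  obtain k where k: "g = reflect_poly g * k" using assms(2) by (rule dvdE)
  have "g \<noteq> 0" using assms(1) by auto
  hence "k \<noteq> 0" using k by (metis mult_zero_right)
  have "degree k = 0" using k \<open>g \<noteq> 0\<close> \<open>k \<noteq> 0\<close> assms(1)
    by (metis add_cancel_right_right degree_mult_eq degree_reflect_poly_eq reflect_poly_eq_0_iff)
  then obtain c where c: "k = [:c:]" by (metis degree_0_id)
  have "c \<noteq> 0" using \<open>k \<noteq> 0\<close> c by simp
  have "reflect_poly g * k = smult c (reflect_poly g)" by (simp add: c)
  hence "smult (inverse c) g = smult (inverse c) (smult c (reflect_poly g))" using k by simp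
  hence "reflect_poly g = smult (inverse c) g" using \<open>c \<noteq> 0\<close> by simp
  with \<open>g \<noteq> 0\<close> show ?thesis by (auto simp: self_reciprocal_def)
qed

theorem lemma3p2:
  fixes g11 g12 g22 :: "'a::{field_gcd,finite} poly" and m :: nat
  assumes "m \<ge> 1"
    and "coprime (CARD('a)) m"
    and "g11 dvd xm1 m"
    and "g22 dvd xm1 m"
    and "g12 = 0 \<or> degree g12 < degree g22"
    and "g11 * g22 dvd xm1 m * g12"
    and "euclid_LCD m (qc_code m g11 g12 g22)"
  shows "self_reciprocal (gcd g11 g22)"
proof -
  define g where "g = gcd g11 g22"
  have sqf: "squarefree (xm1 m :: 'a poly)"
    by (intro squarefree_xm1 of_nat_neq_0_if_coprime_CARD assms(2))
  have gh: "g dvd xm1 m" using assms(3) unfolding g_def by (meson dvd_trans gcd_dvd1)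
  have "g * g dvd g11 * g22" unfolding g_def by (intro mult_dvd_mono gcd_dvd1 gcd_dvd2)
  also have "\<dots> dvd xm1 m * g12" by (rule assms(6))
  finally have g_dvd_g12: "g dvd g12" by (rule dvd_if_square_dvd_mult_squarefree[OF sqf gh])
  obtain e where e: "xm1 m = g * e" using gh by (rule dvdE)
  have "- xm1 m = reflect_poly e * reflect_poly g"
    by (metis e reflect_poly_xm1 reflect_poly_mult mult.commute)
  hence u: "xm1 m = - reflect_poly e * reflect_poly g" by (metis minus_minus minus_mult_left)
  have "coeff g 0 * coeff e 0 = -1"
    using coeff_xm1[of m 0, where 'a='a] assms(1) by (simp add: e coeff_mult_0)
  hence g0: "coeff g 0 \<noteq> 0" by auto
  have "reflect_poly g dvd g11 \<and> reflect_poly g dvd g22"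
    by (rule reflect_poly_dvd_if_euclid_LCD[OF assms(1,7) u gh _ g_dvd_g12]) (simp_all add: g_def)
  hence "reflect_poly g dvd g" by (simp add: g_def)
  thus ?thesis unfolding g_def[symmetric] by (rule self_reciprocal_if_reflect_poly_dvd[OF g0])
qed

end
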